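(* For every integer $n\ge1$, $\operatorname{num}_{\mathcal T}(n,-1)=3^{v_3(n!)}$. In particular, for every $n\ge1$, $$\operatorname{num}_{\mathcal T}(3n,-1)=\operatorname{num}_{\mathcal T}(3n+1,-1)=\operatorname{num}_{\mathcal T}(3n+2,-1)=3^{v_3((3n)!)}.$$
   Context: $v_3(M)$ is the exponent of $3$ in the positive integer $M$. A ternary partition of $n$ is a partition of $n$ (finite nonincreasing sequence of positive integers summing to $n$) all of whose parts are powers of $3$ (including $1$); $\mathcal T(n)$ is the set of ternary partitions of $n$, and $m_\lambda(i)$ the number of parts of $\lambda$ equal to $i$. For $\lambda\in\mathcal T(n)$ let $h_{\mathcal T,\lambda}(x)=\prod_{k\ge0}(1+x^{3^k})^{\lfloor n/3^k\rfloor-m_\lambda(3^k)}$. Let $G_{\mathcal T}(n,x)=\gcd\{h_{\mathcal T,\lambda}(x):\lambda\in\mathcal T(n)\}$ in $\mathbb{Z}[x]$ (normalized with positive leading coefficient), and $\operatorname{num}_{\mathcal T}(n,x)=\frac{1}{G_{\mathcal T}(n,x)}\sum_{\lambda\in\mathcal T(n)}h_{\mathcal T,\lambda}(x)\in\mathbb{Z}[x]$. *)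

theory Defs
  imports "HOL-Computational_Algebra.Computational_Algebra" "HOL-Library.Multiset"
begin

definition ternary_partitions :: "nat \<Rightarrow> nat multiset set" where
  "ternary_partitions n = {lam. (\<forall>x\<in>#lam. \<exists>k. x = 3 ^ k) \<and> sum_mset lam = n}"

text \<open>h_{T,lambda}(x) = prod_{k>=0} (1 + x^(3^k))^(floor(n/3^k) - m_lambda(3^k)).
  Factors with 3^k > n are 1 (exponent 0), so the product is taken over k with 3^k <= n.\<close>
definition h_T :: "nat \<Rightarrow> nat multiset \<Rightarrow> int poly" where
  "h_T n lam = (\<Prod>k\<in>{k. 3 ^ k \<le> n}. (1 + monom 1 (3 ^ k)) ^ (n div 3 ^ k - count lam (3 ^ k)))"

definition G_T :: "nat \<Rightarrow> int poly" where
  "G_T n = Gcd (h_T n ` ternary_partitions n)"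

definition num_T :: "nat \<Rightarrow> int poly" where
  "num_T n = (\<Sum>lam\<in>ternary_partitions n. h_T n lam) div G_T n"

end

theory Submission
  imports Defs
begin

(*
  Since 1 + x^(3^k) is the product of the cyclotomic polynomials Phi_(2*3^j), j <= k,
  every h_T n lam is a product of powers of these pairwise coprime polynomials.  The
  exponent of Phi_(2*3^j) is sum_(k>j) floor(n/3^k) plus the excess
  floor(n/3^j) - #{parts of lam that are >= 3^j}, and the excess at j vanishes for the
  partition into as many parts 3^j as possible and parts 1.  Hence G_T n is the product
  of the Phi_(2*3^j)^(sum_(k>j) floor(n/3^k)), and num_T n is the sum over lam of the
  products of the Phi_(2*3^j)^excess.  At x = -1 the factor Phi_2 = 1 + x vanishes and
  Phi_(2*3^j)(-1) = 3 for j > 0, so only the partition 1 + ... + 1, the only one with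
  excess 0 at j = 0, survives; it contributes 3^(sum_(j>0) floor(n/3^j)), which is
  3^(v_3(n!)) by Legendre's formula.
*)

section \<open>Legendre's formula\<close>

lemma less_power_self:
  fixes p :: nat
  assumes "2 \<le> p"
  shows "n < p ^ n"
  using less_exp[of n] power_mono[OF assms, of n] by linarith

lemma multiplicity_fact_Suc:
  fixes p :: nat
  assumes "prime p"
  shows "multiplicity p (fact (Suc n)) = multiplicity p (Suc n) + multiplicity p (fact n)"
proof -
  have "fact (Suc n) = Suc n * (fact n :: nat)" by simp
  then show ?thesis
    using assms by (simp only:) (rule prime_elem_multiplicity_mult_distrib, auto)
qed

lemma multiplicity_fact_Suc_not_dvd:
  fixes p :: nat
  assumes "prime p" "\<not> p dvd Suc n"
  shows "multiplicity p (fact (Suc n)) = multiplicity p (fact n)"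
  using multiplicity_fact_Suc[OF assms(1), of n] not_dvd_imp_multiplicity_0[OF assms(2)] by simp

lemma sum_prime_powers_dvd:
  fixes p m :: nat
  assumes "prime p" "m > 0"
  shows "(\<Sum>k=1..m. if p ^ k dvd m then 1 else 0) = multiplicity p m"
proof -
  have iff: "p ^ k dvd m \<longleftrightarrow> k \<le> multiplicity p m" for k
    using assms by (intro power_dvd_iff_le_multiplicity) auto
  have "multiplicity p m < p ^ multiplicity p m"
    using assms(1) by (simp add: less_power_self prime_ge_2_nat)
  also have "\<dots> \<le> m" using iff[of "multiplicity p m"] assms(2) by (simp add: dvd_imp_le)
  finally have "{k\<in>{1..m}. p ^ k dvd m} = {1..multiplicity p m}" unfolding iff by auto
  then show ?thesis by (simp flip: sum.inter_filter)
qed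

theorem legendre_multiplicity_fact:
  fixes p :: nat
  assumes "prime p"
  shows "multiplicity p (fact n) = (\<Sum>k=1..n. n div p ^ k)"
proof (induction n)
  case (Suc n)
  have "(\<Sum>k=1..Suc n. Suc n div p ^ k)
      = (\<Sum>k=1..Suc n. n div p ^ k + (if p ^ k dvd Suc n then 1 else 0))"
    by (intro sum.cong refl) (auto simp: div_Suc dvd_eq_mod_eq_0)
  also have "\<dots> = (\<Sum>k=1..Suc n. n div p ^ k) + multiplicity p (Suc n)"
    by (simp only: sum.distrib sum_prime_powers_dvd[OF assms])
  also have "(\<Sum>k=1..Suc n. n div p ^ k) = (\<Sum>k=1..n. n div p ^ k)"
    using less_power_self[of p "Suc n"] assms by (simp add: prime_ge_2_nat)
  finally show ?case
    using Suc.IH multiplicity_fact_Suc[OF assms, of n] by linarith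
qed simp

section \<open>Gcd of products of pairwise coprime powers\<close>

lemma Gcd_prod_coprime_powers:
  fixes P :: "'b \<Rightarrow> 'a::semiring_Gcd"
  assumes "finite J" "T \<noteq> {}"
    and coprime: "\<And>i j. i \<in> J \<Longrightarrow> j \<in> J \<Longrightarrow> i \<noteq> j \<Longrightarrow> coprime (P i) (P j)"
    and nonzero: "\<And>j. j \<in> J \<Longrightarrow> P j \<noteq> 0"
    and attained: "\<And>j. j \<in> J \<Longrightarrow> \<exists>t\<in>T. e t j = 0"
  shows "Gcd ((\<lambda>t. \<Prod>j\<in>J. P j ^ (m j + e t j)) ` T) = normalize (\<Prod>j\<in>J. P j ^ m j)"
    (is "Gcd (?f ` T) = normalize ?D")
proof -
  define R where "R t = (\<Prod>j\<in>J. P j ^ e t j)" for t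
  have f_eq: "?f t = ?D * R t" for t
    by (simp add: R_def power_add prod.distrib)
  have "?D \<noteq> 0" using \<open>finite J\<close> nonzero by auto
  have "?D dvd Gcd (?f ` T)" by (rule Gcd_greatest) (auto simp: f_eq)
  then obtain Q where GQ: "Gcd (?f ` T) = ?D * Q" by blast
  have Q_dvd: "Q dvd R t" if "t \<in> T" for t
  proof -
    have "Gcd (?f ` T) dvd ?f t" using that by (intro Gcd_dvd) simp
    then have "?D * Q dvd ?D * R t" by (simp only: GQ) (simp only: f_eq)
    then show ?thesis using \<open>?D \<noteq> 0\<close> by simp
  qed
  have "coprime Q (P j)" if j: "j \<in> J" for j
  proof -
    obtain t where "t \<in> T" "e t j = 0" using attained[OF j] by blast
    have "coprime (P j) (P i ^ e t i)" if "i \<in> J" for i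
    proof (cases "i = j")
      case False
      then show ?thesis using coprime j \<open>i \<in> J\<close> by (simp add: coprime_power_right_iff)
    qed (simp add: \<open>e t j = 0\<close>)
    then have "coprime (P j) (R t)"
      unfolding R_def by (rule prod_coprime_right)
    then show ?thesis using Q_dvd[OF \<open>t \<in> T\<close>] coprime_divisors[of "P j" "P j" Q "R t"]
      by (simp add: coprime_commute)
  qed
  moreover obtain t where "t \<in> T" using \<open>T \<noteq> {}\<close> by blast
  ultimately have "coprime Q (R t)"
    unfolding R_def by (intro prod_coprime_right) (simp add: coprime_power_right_iff)
  then have "is_unit Q" using Q_dvd[OF \<open>t \<in> T\<close>] by (auto intro: coprime_common_divisor)
  have "Gcd (?f ` T) = normalize (Gcd (?f ` T))" by simp
  also have "\<dots> = normalize ?D" using \<open>is_unit Q\<close> by (simp add: GQ)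
  finally show ?thesis .
qed

section \<open>The cyclotomic factors of $1 + x^{3^k}$\<close>

lemma is_unit_if_dvd_monic_and_degree_0:
  fixes d :: "'a::idom_divide poly"
  assumes "d dvd p" "lead_coeff p = 1" "degree d = 0"
  shows "is_unit d"
proof -
  obtain f where "p = d * f" using assms(1) by blast
  then have "lead_coeff d * lead_coeff f = 1"
    using assms(2) by (simp add: lead_coeff_mult)
  then have "lead_coeff d dvd 1" by (metis dvd_triv_left)
  moreover have "d = [:lead_coeff d:]" using assms(3) by (metis degree_0_id)
  ultimately show ?thesis by (metis is_unit_const_poly_iff)
qed

lemma normalize_monic:
  fixes p :: "'a::{normalization_semidom_multiplicative, idom_divide} poly"
  assumes "lead_coeff p = 1"
  shows "normalize p = p"
  using assms by (simp add: normalize_poly_eq_map_poly map_poly_idI)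

(* cyclo j is the cyclotomic polynomial Phi_(2*3^j). *)
fun cyclo :: "nat \<Rightarrow> int poly" where
  "cyclo 0 = [:1, 1:]"
| "cyclo (Suc k) = 1 - monom 1 (3 ^ k) + monom 1 (3 ^ k) ^ 2"

lemma one_plus_monom_pow3_Suc:
  "1 + monom 1 (3 ^ Suc k) = (1 + monom 1 (3 ^ k)) * (cyclo (Suc k) :: int poly)"
proof -
  have "monom (1::int) (3 ^ Suc k) = monom 1 (3 ^ k) ^ 3"
    by (simp add: monom_power mult.commute)
  then show ?thesis
    by (simp add: algebra_simps power2_eq_square power3_eq_cube)
qed

lemma one_plus_monom_pow3_eq_prod_cyclo:
  "1 + monom 1 (3 ^ k) = (\<Prod>j\<le>k. cyclo j)"
proof (induction k)
  case 0
  show ?case by (simp add: monom_Suc monom_0 one_pCons)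
next
  case (Suc k)
  have "1 + monom 1 (3 ^ Suc k) = (1 + monom 1 (3 ^ k)) * cyclo (Suc k)"
    by (rule one_plus_monom_pow3_Suc)
  then show ?case using Suc.IH by (simp only: prod.atMost_Suc)
qed

lemma lead_coeff_cyclo: "lead_coeff (cyclo j) = 1"
proof (cases j)
  case (Suc k)
  let ?y = "monom (1::int) (3 ^ k)"
  have "degree (1 - ?y) \<le> 3 ^ k"
    using degree_diff_le_max[of 1 ?y] by (simp add: degree_monom_eq)
  also have "\<dots> < degree (?y ^ 2)"
    by (simp add: degree_power_eq degree_monom_eq)
  finally have "lead_coeff (1 - ?y + ?y ^ 2) = lead_coeff (?y ^ 2)"
    by (rule lead_coeff_add_le)
  then show ?thesis
    using Suc by (simp add: lead_coeff_power degree_monom_eq)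
qed simp

lemma cyclo_nonzero: "cyclo j \<noteq> 0"
  using lead_coeff_cyclo[of j] by auto

lemma poly_cyclo_minus_one: "poly (cyclo j) (-1) = (if j = 0 then 0 else 3)"
  by (cases j) (simp_all add: poly_monom odd_pos)

lemma coprime_cyclo_Suc:
  assumes "i \<le> k"
  shows "coprime (cyclo i) (cyclo (Suc k))"
proof (rule coprimeI)
  fix d assume d_i: "d dvd cyclo i" and d_Suc: "d dvd cyclo (Suc k)"
  let ?y = "monom (1::int) (3 ^ k)"
  have "cyclo i dvd 1 + ?y"
    unfolding one_plus_monom_pow3_eq_prod_cyclo using assms by (intro dvd_prodI) auto
  then have "d dvd (1 + ?y) * (?y - 2)" using d_i by (meson dvd_mult2 dvd_trans)
  moreover have "cyclo (Suc k) = 3 + (1 + ?y) * (?y - 2)"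
    by (simp add: algebra_simps power2_eq_square)
  ultimately have "d dvd 3" using d_Suc by (metis dvd_add_left_iff)
  then have "degree d = 0"
    using dvd_imp_degree_le[of d 3] by simp
  then show "is_unit d"
    using d_i lead_coeff_cyclo by (rule is_unit_if_dvd_monic_and_degree_0[rotated 2])
qed

lemma coprime_cyclo: "i \<noteq> j \<Longrightarrow> coprime (cyclo i) (cyclo j)"
proof (induction i j rule: linorder_wlog)
  case (le i j)
  then obtain k where "j = Suc k" "i \<le> k" by (cases j) auto
  then show ?case using coprime_cyclo_Suc[of i k] by simp
qed (simp add: coprime_commute)

section \<open>Ternary partitions\<close>

definition pow3_exps :: "nat \<Rightarrow> nat set" where
  "pow3_exps n = {k. 3 ^ k \<le> n}"

lemma pow3_exps_le: "k \<in> pow3_exps n \<Longrightarrow> k \<le> n"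
  using less_power_self[of 3 k] by (simp add: pow3_exps_def)

lemma finite_pow3_exps: "finite (pow3_exps n)"
  by (rule finite_subset[of _ "{..n}"]) (auto dest: pow3_exps_le)

lemma pow3_exps_downward_closed:
  assumes "j \<le> k" "k \<in> pow3_exps n"
  shows "j \<in> pow3_exps n"
proof -
  have "(3::nat) ^ j \<le> 3 ^ k" using assms(1) by (simp add: power_increasing)
  then show ?thesis using assms(2) unfolding pow3_exps_def mem_Collect_eq by linarith
qed

definition parts_ge :: "nat \<Rightarrow> nat multiset \<Rightarrow> nat" where
  "parts_ge c M = size {#x \<in># M. c \<le> x#}"

lemma parts_ge_union [simp]: "parts_ge c (M + N) = parts_ge c M + parts_ge c N"
  by (simp add: parts_ge_def)

lemma parts_ge_replicate_mset [simp]: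
  "parts_ge c (replicate_mset k x) = (if c \<le> x then k else 0)"
  by (induction k) (auto simp: parts_ge_def)

lemma parts_ge_mult_le_sum_mset: "parts_ge c M * c \<le> sum_mset M"
  unfolding parts_ge_def by (induction M) auto

lemma count_mult_le_sum_mset: "count M x * x \<le> sum_mset (M :: nat multiset)"
  by (induction M) (auto simp: algebra_simps)

lemma parts_ge_eq_size: "\<forall>x\<in>#M. c \<le> x \<Longrightarrow> parts_ge c M = size M"
proof -
  assume "\<forall>x\<in>#M. c \<le> x"
  then have "{#x \<in># M. c \<le> x#} = M" by (simp add: filter_mset_eq_conv)
  then show ?thesis by (simp add: parts_ge_def)
qed

lemma size_eq_sum_mset_imp_replicate_one:
  fixes M :: "nat multiset"
  assumes "\<forall>x\<in>#M. 1 \<le> x" "size M = sum_mset M"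
  shows "M = replicate_mset (size M) 1"
  using assms
proof (induction M)
  case (add a M)
  have "size M \<le> sum_mset M"
    using add.prems(1) parts_ge_mult_le_sum_mset[of 1 M] by (simp add: parts_ge_eq_size)
  then have "a = 1" "size M = sum_mset M" using add.prems by auto
  then show ?case using add.IH add.prems(1) by simp
qed simp

lemma sum_count_pow3_eq_parts_ge:
  assumes "finite A" "set_mset M \<subseteq> (\<lambda>k. 3 ^ k) ` A"
  shows "(\<Sum>k\<in>{k\<in>A. j \<le> k}. count M (3 ^ k)) = parts_ge (3 ^ j) M"
  using assms(2)
proof (induction M)
  case (add a M)
  then obtain t where t: "a = 3 ^ t" "t \<in> A" by auto
  have "(\<Sum>k\<in>{k\<in>A. j \<le> k}. count (add_mset a M) (3 ^ k))
      = (\<Sum>k\<in>{k\<in>A. j \<le> k}. count M (3 ^ k) + (if k = t then 1 else 0))"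
    by (intro sum.cong) (auto simp: t)
  also have "\<dots> = parts_ge (3 ^ j) M + (if j \<le> t then 1 else 0)"
    using add t \<open>finite A\<close> by (simp add: sum.distrib)
  also have "\<dots> = parts_ge (3 ^ j) (add_mset a M)"
    by (simp add: parts_ge_def t)
  finally show ?case .
qed (simp add: parts_ge_def)

lemma ternary_partition_parts:
  assumes "lam \<in> ternary_partitions n" "x \<in># lam"
  shows "\<exists>k\<in>pow3_exps n. x = 3 ^ k"
proof -
  obtain k where "x = 3 ^ k" using assms by (auto simp: ternary_partitions_def)
  moreover have "x \<le> n"
    using assms by (auto simp: ternary_partitions_def dest!: multi_member_split)
  ultimately show ?thesis by (auto simp: pow3_exps_def)
qed

lemma parts_ge_ternary_partition_le:
  "lam \<in> ternary_partitions n \<Longrightarrow> parts_ge (3 ^ j) lam \<le> n div 3 ^ j"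
  using parts_ge_mult_le_sum_mset[of "3 ^ j" lam]
  by (simp add: ternary_partitions_def less_eq_div_iff_mult_less_eq)

lemma count_ternary_partition_le:
  "lam \<in> ternary_partitions n \<Longrightarrow> count lam (3 ^ k) \<le> n div 3 ^ k"
  using count_mult_le_sum_mset[of lam "3 ^ k"]
  by (simp add: ternary_partitions_def less_eq_div_iff_mult_less_eq)

lemma h_T_eq_prod_cyclo_sum:
  "h_T n lam = (\<Prod>j\<in>pow3_exps n. cyclo j ^
     (\<Sum>k\<in>{k\<in>pow3_exps n. j \<le> k}. n div 3 ^ k - count lam (3 ^ k)))"
proof -
  define K where "K = pow3_exps n"
  define a where "a k = n div 3 ^ k - count lam (3 ^ k)" for k
  have "h_T n lam = (\<Prod>k\<in>K. (\<Prod>j\<in>{j\<in>K. j \<le> k}. cyclo j) ^ a k)"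
    unfolding h_T_def K_def pow3_exps_def[symmetric] a_def
  proof (intro prod.cong refl)
    fix k assume "k \<in> pow3_exps n"
    then have "{..k} = {j\<in>pow3_exps n. j \<le> k}"
      using pow3_exps_downward_closed by auto
    then show "(1 + monom 1 (3 ^ k)) ^ (n div 3 ^ k - count lam (3 ^ k))
       = (\<Prod>j\<in>{j\<in>pow3_exps n. j \<le> k}. cyclo j) ^ (n div 3 ^ k - count lam (3 ^ k))"
      by (simp add: one_plus_monom_pow3_eq_prod_cyclo)
  qed
  also have "\<dots> = (\<Prod>k\<in>K. \<Prod>j\<in>{j\<in>K. j \<le> k}. cyclo j ^ a k)"
    by (simp add: prod_power_distrib)
  also have "\<dots> = (\<Prod>j\<in>K. \<Prod>k\<in>{k\<in>K. j \<le> k}. cyclo j ^ a k)"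
    unfolding K_def by (rule prod.swap_restrict[OF finite_pow3_exps finite_pow3_exps])
  also have "\<dots> = (\<Prod>j\<in>K. cyclo j ^ (\<Sum>k\<in>{k\<in>K. j \<le> k}. a k))"
    by (simp add: power_sum)
  finally show ?thesis by (simp add: K_def a_def)
qed

lemma parts_ge_one_ternary_partition:
  "lam \<in> ternary_partitions n \<Longrightarrow> parts_ge 1 lam = size lam"
  by (rule parts_ge_eq_size) (auto simp: ternary_partitions_def)

lemma finite_ternary_partitions: "finite (ternary_partitions n)"
proof (rule finite_subset)
  show "ternary_partitions n \<subseteq> (\<Union>s\<le>n. multisets_of_size {..n} s)"
  proof
    fix lam assume lam: "lam \<in> ternary_partitions n"
    have "set_mset lam \<subseteq> {..n}"
      using ternary_partition_parts[OF lam] pow3_exps_def by fastforce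
    moreover have "size lam \<le> n"
      using parts_ge_ternary_partition_le[OF lam, of 0] parts_ge_one_ternary_partition[OF lam] by simp
    ultimately show "lam \<in> (\<Union>s\<le>n. multisets_of_size {..n} s)"
      by (auto simp: multisets_of_size_def)
  qed
qed auto

definition gcd_exponent :: "nat \<Rightarrow> nat \<Rightarrow> nat" where
  "gcd_exponent n j = (\<Sum>k\<in>{k\<in>pow3_exps n. j < k}. n div 3 ^ k)"

definition excess_exponent :: "nat \<Rightarrow> nat multiset \<Rightarrow> nat \<Rightarrow> nat" where
  "excess_exponent n lam j = n div 3 ^ j - parts_ge (3 ^ j) lam"

lemma cyclo_exponent_ternary_partition:
  assumes lam: "lam \<in> ternary_partitions n" and j: "j \<in> pow3_exps n"
  shows "(\<Sum>k\<in>{k\<in>pow3_exps n. j \<le> k}. n div 3 ^ k - count lam (3 ^ k))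
    = gcd_exponent n j + excess_exponent n lam j"
proof -
  have "(\<Sum>k\<in>{k\<in>pow3_exps n. j \<le> k}. n div 3 ^ k - count lam (3 ^ k))
      = (\<Sum>k\<in>{k\<in>pow3_exps n. j \<le> k}. n div 3 ^ k)
        - (\<Sum>k\<in>{k\<in>pow3_exps n. j \<le> k}. count lam (3 ^ k))"
    using count_ternary_partition_le[OF lam] by (intro sum_subtractf_nat) auto
  also have "(\<Sum>k\<in>{k\<in>pow3_exps n. j \<le> k}. count lam (3 ^ k)) = parts_ge (3 ^ j) lam"
    using ternary_partition_parts[OF lam] finite_pow3_exps
    by (intro sum_count_pow3_eq_parts_ge) auto
  also have "(\<Sum>k\<in>{k\<in>pow3_exps n. j \<le> k}. n div 3 ^ k) = n div 3 ^ j + gcd_exponent n j"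
  proof -
    have "{k\<in>pow3_exps n. j \<le> k} = insert j {k\<in>pow3_exps n. j < k}"
      using j by auto
    then show ?thesis using finite_pow3_exps by (simp add: gcd_exponent_def)
  qed
  finally show ?thesis
    using parts_ge_ternary_partition_le[OF lam, of j] by (simp add: excess_exponent_def)
qed

lemma h_T_eq_prod_cyclo:
  assumes "lam \<in> ternary_partitions n"
  shows "h_T n lam = (\<Prod>j\<in>pow3_exps n. cyclo j ^ (gcd_exponent n j + excess_exponent n lam j))"
  unfolding h_T_eq_prod_cyclo_sum
  using cyclo_exponent_ternary_partition[OF assms] by (intro prod.cong) auto

definition greedy_ternary_partition :: "nat \<Rightarrow> nat \<Rightarrow> nat multiset" where
  "greedy_ternary_partition n j = replicate_mset (n div 3 ^ j) (3 ^ j) + replicate_mset (n mod 3 ^ j) 1"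

lemma greedy_ternary_partition_in: "greedy_ternary_partition n j \<in> ternary_partitions n"
proof -
  have "\<forall>x\<in>#greedy_ternary_partition n j. \<exists>k. x = 3 ^ k"
    by (auto simp: greedy_ternary_partition_def intro: exI[of _ 0])
  then show ?thesis
    by (simp add: ternary_partitions_def greedy_ternary_partition_def div_mult_mod_eq)
qed

lemma excess_exponent_greedy_ternary_partition:
  "excess_exponent n (greedy_ternary_partition n j) j = 0"
  by (cases j) (simp_all add: excess_exponent_def greedy_ternary_partition_def)

section \<open>The gcd and the numerator\<close>

lemma G_T_eq_prod_cyclo:
  "G_T n = (\<Prod>j\<in>pow3_exps n. cyclo j ^ gcd_exponent n j)"
proof -
  have "h_T n ` ternary_partitions n
      = (\<lambda>lam. \<Prod>j\<in>pow3_exps n. cyclo j ^ (gcd_exponent n j + excess_exponent n lam j))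
          ` ternary_partitions n"
    by (rule image_cong) (simp_all add: h_T_eq_prod_cyclo)
  also have "Gcd \<dots> = normalize (\<Prod>j\<in>pow3_exps n. cyclo j ^ gcd_exponent n j)"
  proof (rule Gcd_prod_coprime_powers)
    show "\<exists>lam\<in>ternary_partitions n. excess_exponent n lam j = 0" for j
      using greedy_ternary_partition_in excess_exponent_greedy_ternary_partition by blast
  qed (use finite_pow3_exps greedy_ternary_partition_in coprime_cyclo cyclo_nonzero in blast)+
  also have "\<dots> = (\<Prod>j\<in>pow3_exps n. cyclo j ^ gcd_exponent n j)"
    by (simp add: normalize_monic lead_coeff_prod lead_coeff_power lead_coeff_cyclo)
  finally show ?thesis by (simp add: G_T_def)
qed

lemma num_T_eq_sum_prod_cyclo:
  "num_T n = (\<Sum>lam\<in>ternary_partitions n. \<Prod>j\<in>pow3_exps n. cyclo j ^ excess_exponent n lam j)"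
proof -
  have "(\<Sum>lam\<in>ternary_partitions n. h_T n lam)
      = G_T n * (\<Sum>lam\<in>ternary_partitions n. \<Prod>j\<in>pow3_exps n. cyclo j ^ excess_exponent n lam j)"
    by (simp add: G_T_eq_prod_cyclo h_T_eq_prod_cyclo sum_distrib_left power_add prod.distrib)
  moreover have "G_T n \<noteq> 0"
    using finite_pow3_exps cyclo_nonzero by (simp add: G_T_eq_prod_cyclo)
  ultimately show ?thesis by (simp add: num_T_def)
qed

lemma excess_exponent_all_ones:
  "excess_exponent n (replicate_mset n 1) j = (if j = 0 then 0 else n div 3 ^ j)"
  using power_le_one_iff[of "3::nat" j] by (auto simp: excess_exponent_def)

lemma excess_exponent_0_pos:
  assumes "lam \<in> ternary_partitions n" "lam \<noteq> replicate_mset n 1"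
  shows "excess_exponent n lam 0 > 0"
proof -
  have "size lam \<le> n"
    using parts_ge_ternary_partition_le[OF assms(1), of 0] parts_ge_one_ternary_partition[OF assms(1)]
    by simp
  moreover have "size lam \<noteq> n"
  proof
    assume "size lam = n"
    moreover have "\<forall>x\<in>#lam. 1 \<le> x" "sum_mset lam = n"
      using assms(1) by (auto simp: ternary_partitions_def)
    ultimately show False
      using size_eq_sum_mset_imp_replicate_one[of lam] assms(2) by simp
  qed
  ultimately show ?thesis
    using parts_ge_one_ternary_partition[OF assms(1)] by (simp add: excess_exponent_def)
qed

lemma sum_div_pow3_exps_eq_legendre:
  "(\<Sum>j\<in>pow3_exps n - {0}. n div 3 ^ j) = (\<Sum>k=1..n. n div 3 ^ k)"
proof (rule sum.mono_neutral_left)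
  show "pow3_exps n - {0} \<subseteq> {1..n}" using pow3_exps_le by auto
  show "\<forall>k\<in>{1..n} - (pow3_exps n - {0}). n div 3 ^ k = 0"
    by (auto simp: pow3_exps_def div_eq_0_iff)
qed simp

lemma poly_num_T_minus_one:
  assumes "n \<ge> 1"
  shows "poly (num_T n) (-1) = 3 ^ (\<Sum>k=1..n. n div 3 ^ k)"
proof -
  define K where "K = pow3_exps n"
  define ones where "ones = replicate_mset n (1::nat)"
  define val where "val lam = (\<Prod>j\<in>K. poly (cyclo j) (-1) ^ excess_exponent n lam j)" for lam
  have "0 \<in> K" using assms by (simp add: K_def pow3_exps_def)
  have ones_in: "ones \<in> ternary_partitions n"
    using greedy_ternary_partition_in[of n 0] by (simp add: ones_def greedy_ternary_partition_def)
  have "val lam = 0" if "lam \<in> ternary_partitions n" "lam \<noteq> ones" for lam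
  proof -
    have "poly (cyclo 0) (-1) ^ excess_exponent n lam 0 = 0"
      using excess_exponent_0_pos[OF that[unfolded ones_def]] by (simp add: poly_cyclo_minus_one)
    then show ?thesis unfolding val_def using \<open>0 \<in> K\<close> finite_pow3_exps K_def by (metis prod_zero_iff)
  qed
  then have "poly (num_T n) (-1) = val ones"
    using ones_in finite_ternary_partitions
    by (simp add: num_T_eq_sum_prod_cyclo poly_sum poly_prod val_def K_def sum.remove)
  also have "val ones = (\<Prod>j\<in>K. poly (cyclo j) (-1) ^ (if j = 0 then 0 else n div 3 ^ j))"
    unfolding val_def ones_def excess_exponent_all_ones ..
  also have "\<dots> = (\<Prod>j\<in>K - {0}. 3 ^ (n div 3 ^ j))"
    using \<open>0 \<in> K\<close> finite_pow3_exps K_def by (simp add: prod.remove poly_cyclo_minus_one)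
  also have "\<dots> = 3 ^ (\<Sum>j\<in>K - {0}. n div 3 ^ j)"
    by (simp add: power_sum)
  also have "\<dots> = 3 ^ (\<Sum>k=1..n. n div 3 ^ k)"
    by (simp only: K_def sum_div_pow3_exps_eq_legendre)
  finally show ?thesis .
qed

lemma poly_num_T_minus_one_eq_multiplicity:
  "n \<ge> 1 \<Longrightarrow> poly (num_T n) (-1) = 3 ^ multiplicity (3::nat) (fact n)"
  by (simp add: poly_num_T_minus_one legendre_multiplicity_fact)

theorem theorem4:
  shows "(\<forall>n::nat. n \<ge> 1 \<longrightarrow> poly (num_T n) (-1) = 3 ^ multiplicity (3::nat) (fact n))
    \<and> (\<forall>n::nat. n \<ge> 1 \<longrightarrow>
          poly (num_T (3*n)) (-1) = 3 ^ multiplicity (3::nat) (fact (3*n)) \<and>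
          poly (num_T (3*n+1)) (-1) = 3 ^ multiplicity (3::nat) (fact (3*n)) \<and>
          poly (num_T (3*n+2)) (-1) = 3 ^ multiplicity (3::nat) (fact (3*n)))"
proof (intro conjI allI impI)
  fix n :: nat
  assume "n \<ge> 1"
  then show "poly (num_T n) (-1) = 3 ^ multiplicity (3::nat) (fact n)"
    by (rule poly_num_T_minus_one_eq_multiplicity)
next
  fix n :: nat
  assume "n \<ge> 1"
  have "multiplicity (3::nat) (fact (3*n+1)) = multiplicity (3::nat) (fact (3*n))"
    unfolding Suc_eq_plus1[symmetric] by (rule multiplicity_fact_Suc_not_dvd) (simp, presburger)
  moreover have "multiplicity (3::nat) (fact (3*n+2)) = multiplicity (3::nat) (fact (3*n+1))"
    unfolding add_2_eq_Suc' Suc_eq_plus1[symmetric]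
    by (rule multiplicity_fact_Suc_not_dvd) (simp, presburger)
  ultimately show
    "poly (num_T (3*n)) (-1) = 3 ^ multiplicity (3::nat) (fact (3*n))"
    "poly (num_T (3*n+1)) (-1) = 3 ^ multiplicity (3::nat) (fact (3*n))"
    "poly (num_T (3*n+2)) (-1) = 3 ^ multiplicity (3::nat) (fact (3*n))"
    using \<open>n \<ge> 1\<close> poly_num_T_minus_one_eq_multiplicity by simp_all
qed

end
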